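(* Let $V=(v_1,\dots,v_n)$ be an exchange collection in $(L,\omega)$, and let $L'\subset L$ be a sublattice of finite index containing all $v_i$, with form $\omega'=\omega|_{L'}$. Via restriction, $L^*\subset L'^*$, hence $\mathcal Q[L^*]\subset\mathcal Q[L'^*]$ and $\mathbb K_L\subset\mathbb K_{L'}$. The finite group $G=L/L'$ acts on $\mathcal Q[L'^*]$ and on $\mathbb K_{L'}$ by letting $n\in L$ send $X^{m'}\mapsto e^{2\pi i (m',n)}X^{m'}$, where $(m',n)\in\mathbb Q$ is the $\mathbb Q$-linear extension of the pairing $L'^*\times L'\to\mathbb Z$. Then $$\mathcal U(L,\omega;V)=\mathcal U(L',\omega';V)^G=\mathcal U(L',\omega';V)\cap\mathcal Q[L^*].$$
   Context: Let $L\cong\mathbb Z^r$ be a lattice, $L^*=\mathrm{Hom}(L,\mathbb Z)$, $(\cdot,\cdot)$ the canonical pairing, and $\omega:L\times L\to\mathbb Z$ a skew-symmetric bilinear form. Let $\mathcal Q=\mathbb Q(e^{2\pi i\mathbb Q})$ be $\mathbb Q$ with all roots of unity adjoined, $\mathcal Q[L^*]$ the group algebra of $L^*$ with monomials $X^m$ ($m\in L^*$), and $\mathbb K_L$ its fraction field (similarly for $L'$). For $v\in L$ let $\mu_v^*$ be the $\mathcal Q$-algebra automorphism of $\mathbb K_L$ given by $\mu_v^*(X^m)=X^m\,(1+X^{\omega(\cdot,v)})^{-(m,v)}$, where $\omega(\cdot,v)\in L^*$ is $w\mapsto\omega(w,v)$. An exchange collection is an $n$-tuple $V\in L^n$ (repetitions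 allowed), with multiplicity function $m_V(v)=\#\{i: v_i=v\}$. The upper bound is $\mathcal U(L,\omega;V)=\mathcal Q[L^*]\cap\bigcap_{v\in L}(\mu_v^* )^{m_V(v)}(\mathcal Q[L^*])\subset\mathbb K_L$, and analogously $\mathcal U(L',\omega';V)\subset\mathbb K_{L'}$ using the mutations of $(L',\omega')$. *)

theory Defs
  imports Complex_Main "HOL-Library.Function_Algebras" "HOL-Library.Poly_Mapping" "HOL-Computational_Algebra.Fraction_Field"
begin

text \<open>
The lattice L is Z^r, with r = CARD('r) (the index type 'r is finite and
linearly ordered).  Characters
(exponents) are rational vectors 'r =>0 rat, i.e. elements of Q (x) L^*; the pairing
with a lattice vector is the standard dot product.  L^* and L'^* are the subgroups
of rational vectors pairing integrally with L resp. L'  (this is the inclusion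
L^* in L'^* given by restriction).  All group algebras live in the ambient
group algebra  ('r =>0 rat) =>0 complex, which is an integral domain, and all
fraction fields are subfields of its field of fractions.
\<close>

type_synonym 'r lvec = "'r \<Rightarrow> int"
type_synonym 'r expo = "'r \<Rightarrow>\<^sub>0 rat"
type_synonym 'r galg = "'r expo \<Rightarrow>\<^sub>0 complex"

inductive_set cyclo_field :: "complex set" where
  rat: "of_rat q \<in> cyclo_field"
| root: "cis (2 * pi * of_rat q) \<in> cyclo_field"
| add: "x \<in> cyclo_field \<Longrightarrow> y \<in> cyclo_field \<Longrightarrow> x + y \<in> cyclo_field"
| mult: "x \<in> cyclo_field \<Longrightarrow> y \<in> cyclo_field \<Longrightarrow> x * y \<in> cyclo_field"
| uminus: "x \<in> cyclo_field \<Longrightarrow> - x \<in> cyclo_field"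
| inverse: "x \<in> cyclo_field \<Longrightarrow> inverse x \<in> cyclo_field"

definition pair :: "('r::finite) expo \<Rightarrow> 'r lvec \<Rightarrow> rat" where
  "pair m w = (\<Sum>i\<in>UNIV. Poly_Mapping.lookup m i * of_int (w i))"

definition dual :: "('r::finite) lvec set \<Rightarrow> 'r expo set" where
  "dual Lat = {m. \<forall>w\<in>Lat. pair m w \<in> \<int>}"

definition unit_vec :: "'r \<Rightarrow> 'r lvec" where
  "unit_vec i = (\<lambda>j. if j = i then 1 else 0)"

definition omega_char :: "('r::finite lvec \<Rightarrow> 'r lvec \<Rightarrow> int) \<Rightarrow> 'r lvec \<Rightarrow> 'r expo" where
  "omega_char \<omega> v = (\<Sum>i\<in>UNIV. Poly_Mapping.single i (of_int (\<omega> (unit_vec i) v)))"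

text \<open>Group algebra Q[M] for an exponent group M (monomial X^m = single m 1).\<close>
definition gpoly :: "('r::{finite,linorder}) expo set \<Rightarrow> 'r galg set" where
  "gpoly M = {f. Poly_Mapping.keys f \<subseteq> M \<and> (\<forall>m. Poly_Mapping.lookup f m \<in> cyclo_field)}"

definition gpolyF :: "('r::{finite,linorder}) expo set \<Rightarrow> 'r galg fract set" where
  "gpolyF M = (\<lambda>p. Fract p 1) ` gpoly M"

definition fracfield :: "('r::{finite,linorder}) expo set \<Rightarrow> 'r galg fract set" where
  "fracfield M = {Fract p q | p q. p \<in> gpoly M \<and> q \<in> gpoly M \<and> q \<noteq> 0}"

definition mu_pol :: "('r::{finite,linorder}) expo \<Rightarrow> 'r lvec \<Rightarrow> 'r galg \<Rightarrow> 'r galg fract" where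
  "mu_pol a v p = (\<Sum>m\<in>Poly_Mapping.keys p. Fract (Poly_Mapping.single m (Poly_Mapping.lookup p m)) 1
        * (Fract (1 + Poly_Mapping.single a 1) 1) powi (- \<lfloor>pair m v\<rfloor>))"

definition mu :: "('r::{finite,linorder}) expo set \<Rightarrow> 'r expo \<Rightarrow> 'r lvec \<Rightarrow> 'r galg fract \<Rightarrow> 'r galg fract" where
  "mu M a v x = (let (p, q) = (SOME (p, q). p \<in> gpoly M \<and> q \<in> gpoly M \<and> q \<noteq> 0 \<and> x = Fract p q)
                 in mu_pol a v p / mu_pol a v q)"

definition upper_bound :: "('r::{finite,linorder}) lvec set \<Rightarrow> ('r lvec \<Rightarrow> 'r lvec \<Rightarrow> int)
     \<Rightarrow> 'r lvec list \<Rightarrow> 'r galg fract set" where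
  "upper_bound Lat \<omega> V = gpolyF (dual Lat) \<inter>
      (\<Inter>v\<in>Lat. (mu (dual Lat) (omega_char \<omega> v) v ^^ count_list V v) ` gpolyF (dual Lat))"

definition act :: "('r::{finite,linorder}) lvec \<Rightarrow> 'r galg \<Rightarrow> 'r galg" where
  "act n f = (\<Sum>m\<in>Poly_Mapping.keys f. Poly_Mapping.single m (cis (2 * pi * of_rat (pair m n)) * Poly_Mapping.lookup f m))"

definition act_fract :: "('r::{finite,linorder}) lvec \<Rightarrow> 'r galg fract \<Rightarrow> 'r galg fract" where
  "act_fract n x = (let (p, q) = (SOME (p, q). q \<noteq> 0 \<and> x = Fract p q) in Fract (act n p) (act n q))"

text \<open>Fixed points of G = L/L' (n ranges over L; the action only depends on n mod L').\<close>
definition invariants :: "(('r::{finite,linorder}) galg fract) set \<Rightarrow> 'r galg fract set" where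
  "invariants S = {x \<in> S. \<forall>n::'r lvec. act_fract n x = x}"

end

theory Submission
  imports Defs "HOL-Computational_Algebra.Polynomial_Factorial"
begin

text \<open>
The group \<open>G = L/L'\<close> acts on \<open>Q[L'^*]\<close> through the characters \<open>e^(2 pi i (m,n))\<close>,
and \<open>X^m\<close> is fixed by all of \<open>G\<close> exactly when \<open>m\<close> pairs integrally with \<open>L\<close>;
hence the invariants of \<open>Q[L'^*]\<close> are \<open>Q[L^*]\<close>, which gives the second equality.

For \<open>v \<in> L'\<close> the mutation at \<open>v\<close> is an injective ring endomorphism of \<open>K_L'\<close>
extending the one of \<open>K_L\<close> (injectivity: after clearing a power of \<open>1 + X^a\<close>,
\<open>a = \<omega>(.,v)\<close>, the inverse mutation recovers the polynomial), and it commutes with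
\<open>G\<close> because \<open>\<omega>(.,v) \<in> L^*\<close>. So if an element of \<open>Q[L^*]\<close> is the image of
\<open>y \<in> Q[L'^*]\<close> under iterated mutation, then \<open>y\<close> is \<open>G\<close>-invariant, i.e.
\<open>y \<in> Q[L^*]\<close>. Mutations at \<open>v \<notin> L'\<close> do not occur in \<open>V\<close>, which gives the
first equality.
\<close>

lemma funpow_closed: "(\<And>x. x \<in> A \<Longrightarrow> f x \<in> A) \<Longrightarrow> x \<in> A \<Longrightarrow> (f ^^ n) x \<in> A"
  by (induction n) auto

lemma inj_on_funpow:
  assumes "\<And>x. x \<in> A \<Longrightarrow> f x \<in> A" "inj_on f A"
  shows "inj_on (f ^^ n) A"
proof (induction n)
  case (Suc n)
  have "inj_on f ((f ^^ n) ` A)"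
    using assms funpow_closed[of A f] by (blast intro: inj_on_subset)
  then show ?case
    unfolding funpow.simps(2) using Suc by (rule comp_inj_on[rotated])
qed simp

lemma funpow_cong_on:
  assumes "\<And>x. x \<in> A \<Longrightarrow> f x \<in> A" "\<And>x. x \<in> A \<Longrightarrow> f x = g x" "x \<in> A"
  shows "(f ^^ n) x = (g ^^ n) x"
proof (induction n)
  case (Suc n)
  moreover have "(f ^^ n) x \<in> A" by (rule funpow_closed[OF assms(1,3)])
  ultimately show ?case using assms(2) by simp
qed simp

lemma funpow_commute_on:
  assumes "\<And>x. x \<in> A \<Longrightarrow> f x \<in> A" "\<And>x. x \<in> A \<Longrightarrow> h (f x) = f (h x)" "x \<in> A"
  shows "h ((f ^^ n) x) = (f ^^ n) (h x)"
proof (induction n)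
  case (Suc n)
  have "(f ^^ n) x \<in> A" by (rule funpow_closed[OF assms(1,3)])
  then show ?case using Suc assms(2) by simp
qed simp

lemma sum_fun_apply: "sum f S x = (\<Sum>i\<in>S. f i x)"
  by (induction S rule: infinite_finite_induct) auto

lemma additive_int_scale:
  assumes "additive g"
  shows "g (\<lambda>t. c * x t) = c * g (x :: 'a \<Rightarrow> int)"
proof (induction c rule: int_induct[where k=0])
  case base
  show ?case using additive.zero[OF assms] by (simp add: zero_fun_def)
next
  case (step1 i)
  have "(\<lambda>t. (i + 1) * x t) = (\<lambda>t. i * x t) + x" by (auto simp: algebra_simps)
  then show ?case using step1 additive.add[OF assms] by (simp add: algebra_simps)
next
  case (step2 i)
  have "(\<lambda>t. (i - 1) * x t) = (\<lambda>t. i * x t) - x" by (auto simp: algebra_simps)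
  then have "g (\<lambda>t. (i - 1) * x t) = g (\<lambda>t. i * x t) - g x"
    by (simp add: additive.diff[OF assms])
  then show ?case using step2 by (simp add: algebra_simps)
qed

lemma to_fract_power: "to_fract (x ^ k) = to_fract x ^ k"
  by (induction k) simp_all

section \<open>Maps defined on monomials\<close>

definition extend_monomials :: "('a \<Rightarrow> 'b::zero \<Rightarrow> 'c::comm_monoid_add) \<Rightarrow> ('a \<Rightarrow>\<^sub>0 'b) \<Rightarrow> 'c" where
  "extend_monomials F p = (\<Sum>m\<in>Poly_Mapping.keys p. F m (Poly_Mapping.lookup p m))"

lemma sum_monomials_keys:
  "(\<Sum>m\<in>Poly_Mapping.keys p. Poly_Mapping.single m (Poly_Mapping.lookup p m)) = p"
  by (rule poly_mapping_eqI) (simp add: lookup_sum lookup_single when_def in_keys_iff)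

lemma mult_eq_sum_monomials:
  "p * q = (\<Sum>m\<in>Poly_Mapping.keys p. \<Sum>m'\<in>Poly_Mapping.keys q.
     Poly_Mapping.single (m + m') (Poly_Mapping.lookup p m * Poly_Mapping.lookup q m'))"
  by (subst (1 2) sum_monomials_keys[symmetric]) (simp add: sum_product mult_single)

lemma keys_power_subset:
  assumes "\<And>x y. x \<in> M \<Longrightarrow> y \<in> M \<Longrightarrow> x + y \<in> M" "0 \<in> M" "Poly_Mapping.keys p \<subseteq> M"
  shows "Poly_Mapping.keys (p ^ k) \<subseteq> M"
proof (induction k)
  case (Suc k)
  have "Poly_Mapping.keys (p * p ^ k) \<subseteq> M"
    using keys_mult[of p "p ^ k"] Suc assms by blast
  then show ?case by simp
qed (use assms in simp)

lemma extend_monomials_zero [simp]: "extend_monomials F 0 = 0"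
  by (simp add: extend_monomials_def)

lemma extend_monomials_single:
  "(\<And>m. F m 0 = 0) \<Longrightarrow> extend_monomials F (Poly_Mapping.single k c) = F k c"
  by (simp add: extend_monomials_def)

context
  fixes F :: "'a \<Rightarrow> 'b::comm_monoid_add \<Rightarrow> 'c::comm_monoid_add"
  assumes F_zero: "\<And>m. F m 0 = 0" and F_add: "\<And>m c d. F m (c + d) = F m c + F m d"
begin

lemma extend_monomials_add: "extend_monomials F (p + q) = extend_monomials F p + extend_monomials F q"
  unfolding extend_monomials_def by (rule setsum_keys_plus_distrib) (simp_all add: F_zero F_add)

lemma extend_monomials_sum: "extend_monomials F (sum f S) = (\<Sum>i\<in>S. extend_monomials F (f i))"
  by (induction S rule: infinite_finite_induct) (simp_all add: extend_monomials_add)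

end

lemma extend_monomials_diff:
  fixes F :: "'a \<Rightarrow> 'b::ab_group_add \<Rightarrow> 'c::ab_group_add"
  assumes "\<And>m. F m 0 = 0" "\<And>m c d. F m (c + d) = F m c + F m d"
  shows "extend_monomials F (p - q) = extend_monomials F p - extend_monomials F q"
  using extend_monomials_add[where F=F, OF assms, of "p - q" q] by (simp add: algebra_simps)

lemma extend_monomials_mult:
  fixes F :: "'a::comm_monoid_add \<Rightarrow> 'b::comm_semiring_0 \<Rightarrow> 'c::comm_semiring_0"
  assumes F_zero: "\<And>m. F m 0 = 0" and F_add: "\<And>m c d. F m (c + d) = F m c + F m d"
    and F_mult: "\<And>m m' c d. m \<in> M \<Longrightarrow> m' \<in> M \<Longrightarrow> F (m + m') (c * d) = F m c * F m' d"
    and "Poly_Mapping.keys p \<subseteq> M" "Poly_Mapping.keys q \<subseteq> M"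
  shows "extend_monomials F (p * q) = extend_monomials F p * extend_monomials F q"
proof -
  have "extend_monomials F (p * q) = (\<Sum>m\<in>Poly_Mapping.keys p. \<Sum>m'\<in>Poly_Mapping.keys q.
      F (m + m') (Poly_Mapping.lookup p m * Poly_Mapping.lookup q m'))"
    by (subst mult_eq_sum_monomials)
      (simp add: extend_monomials_sum[OF F_zero F_add] extend_monomials_single[where F=F, OF F_zero])
  also have "\<dots> = (\<Sum>m\<in>Poly_Mapping.keys p. \<Sum>m'\<in>Poly_Mapping.keys q.
      F m (Poly_Mapping.lookup p m) * F m' (Poly_Mapping.lookup q m'))"
    using assms(4,5) by (intro sum.cong refl F_mult) auto
  finally show ?thesis
    by (simp add: extend_monomials_def sum_product)
qed

lemma extend_monomials_one:
  "(\<And>m. F m 0 = 0) \<Longrightarrow> extend_monomials F 1 = F 0 1"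
  by (metis extend_monomials_single single_one)

definition twist :: "('a::{ordered_cancel_comm_monoid_add,linorder} \<Rightarrow> ('a \<Rightarrow>\<^sub>0 'b::idom) fract)
    \<Rightarrow> ('a \<Rightarrow>\<^sub>0 'b) \<Rightarrow> ('a \<Rightarrow>\<^sub>0 'b) fract" where
  "twist E = extend_monomials (\<lambda>m c. to_fract (Poly_Mapping.single m c) * E m)"

lemma twist_single: "twist E (Poly_Mapping.single m c) = to_fract (Poly_Mapping.single m c) * E m"
  by (simp add: twist_def extend_monomials_single)

lemma twist_add: "twist E (p + q) = twist E p + twist E q"
  unfolding twist_def by (rule extend_monomials_add) (simp_all add: single_add distrib_right)

lemma twist_diff: "twist E (p - q) = twist E p - twist E q"
  unfolding twist_def by (rule extend_monomials_diff) (simp_all add: single_add distrib_right)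

lemma twist_sum: "twist E (sum f S) = (\<Sum>i\<in>S. twist E (f i))"
  unfolding twist_def by (rule extend_monomials_sum) (simp_all add: single_add distrib_right)

lemma twist_one: "E 0 = 1 \<Longrightarrow> twist E 1 = 1"
  by (simp add: twist_def extend_monomials_one)

lemma twist_mult:
  assumes "\<And>m m'. m \<in> M \<Longrightarrow> m' \<in> M \<Longrightarrow> E (m + m') = E m * E m'"
    and "Poly_Mapping.keys p \<subseteq> M" "Poly_Mapping.keys q \<subseteq> M"
  shows "twist E (p * q) = twist E p * twist E q"
  unfolding twist_def
  by (rule extend_monomials_mult[where M=M])
    (use assms in \<open>simp_all add: single_add algebra_simps mult_single[symmetric]\<close>)

lemma twist_power:
  assumes "\<And>m m'. m \<in> M \<Longrightarrow> m' \<in> M \<Longrightarrow> E (m + m') = E m * E m'" "E 0 = 1"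
    and "\<And>x y. x \<in> M \<Longrightarrow> y \<in> M \<Longrightarrow> x + y \<in> M" "0 \<in> M" "Poly_Mapping.keys p \<subseteq> M"
  shows "twist E (p ^ k) = twist E p ^ k"
proof (induction k)
  case (Suc k)
  then show ?case
    using twist_mult[OF assms(1) assms(5) keys_power_subset[OF assms(3-5)]] by simp
qed (simp add: twist_one assms(2))

section \<open>Duals and group algebras\<close>

lemma pair_add: "pair (m + m') w = pair m w + pair m' w"
  by (simp add: pair_def lookup_add distrib_right sum.distrib)

lemma pair_0 [simp]: "pair 0 w = 0"
  by (simp add: pair_def)

lemma zero_in_dual: "0 \<in> dual Lat"
  by (simp add: dual_def)

lemma add_in_dual: "m \<in> dual Lat \<Longrightarrow> m' \<in> dual Lat \<Longrightarrow> m + m' \<in> dual Lat"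
  by (auto simp: dual_def pair_add)

lemma dual_antimono: "Lat \<subseteq> Lat' \<Longrightarrow> dual Lat' \<subseteq> dual Lat"
  by (auto simp: dual_def)

lemma pair_omega_char:
  fixes \<omega> :: "('r::finite) lvec \<Rightarrow> 'r lvec \<Rightarrow> int"
  assumes bilin_l: "\<And>x y z. \<omega> (x + y) z = \<omega> x z + \<omega> y z"
  shows "pair (omega_char \<omega> v) w = of_int (\<omega> w v)"
proof -
  have add: "additive (\<lambda>x. \<omega> x v)" by (rule additive.intro) (rule bilin_l)
  have w: "w = (\<Sum>j\<in>UNIV. (\<lambda>t. w j * unit_vec j t))"
  proof
    fix t
    have "(\<Sum>j\<in>UNIV. w j * unit_vec j t) = (\<Sum>j\<in>UNIV. if t = j then w j else 0)"
      by (intro sum.cong) (auto simp: unit_vec_def)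
    then show "w t = (\<Sum>j\<in>UNIV. (\<lambda>t. w j * unit_vec j t)) t"
      by (simp add: sum_fun_apply)
  qed
  have "\<omega> w v = (\<Sum>j\<in>UNIV. \<omega> (\<lambda>t. w j * unit_vec j t) v)"
    by (subst w) (rule additive.sum[OF add])
  also have "\<dots> = (\<Sum>j\<in>UNIV. w j * \<omega> (unit_vec j) v)"
    by (simp add: additive_int_scale[OF add])
  finally show ?thesis
    by (simp add: pair_def omega_char_def lookup_sum lookup_single when_def mult.commute)
qed

lemma cyclo_field_0: "0 \<in> cyclo_field"
  using cyclo_field.rat[of 0] by simp

lemma cyclo_field_1: "1 \<in> cyclo_field"
  using cyclo_field.rat[of 1] by simp

lemma gpoly_keys: "p \<in> gpoly N \<Longrightarrow> Poly_Mapping.keys p \<subseteq> N"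
  by (simp add: gpoly_def)

lemma gpoly_mono: "N \<subseteq> N' \<Longrightarrow> gpoly N \<subseteq> gpoly N'"
  by (auto simp: gpoly_def)

lemma gpoly_0: "0 \<in> gpoly N"
  by (simp add: gpoly_def cyclo_field_0)

lemma gpoly_single: "m \<in> N \<Longrightarrow> c \<in> cyclo_field \<Longrightarrow> Poly_Mapping.single m c \<in> gpoly N"
  by (auto simp: gpoly_def lookup_single when_def cyclo_field_0)

lemma gpoly_1: "0 \<in> N \<Longrightarrow> 1 \<in> gpoly N"
  by (metis gpoly_single cyclo_field_1 single_one)

lemma gpoly_add: "p \<in> gpoly N \<Longrightarrow> q \<in> gpoly N \<Longrightarrow> p + q \<in> gpoly N"
  using keys_add[of p q] by (auto simp: gpoly_def lookup_add intro: cyclo_field.add)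

lemma gpoly_uminus: "p \<in> gpoly N \<Longrightarrow> - p \<in> gpoly N"
  by (auto simp: gpoly_def intro: cyclo_field.uminus)

lemma gpoly_diff: "p \<in> gpoly N \<Longrightarrow> q \<in> gpoly N \<Longrightarrow> p - q \<in> gpoly N"
  by (metis diff_conv_add_uminus gpoly_add gpoly_uminus)

lemma gpoly_sum: "(\<And>i. i \<in> S \<Longrightarrow> f i \<in> gpoly N) \<Longrightarrow> sum f S \<in> gpoly N"
  by (induction S rule: infinite_finite_induct) (simp_all add: gpoly_0 gpoly_add)

lemma single_lookup_gpoly:
  assumes "p \<in> gpoly N"
  shows "Poly_Mapping.single m (Poly_Mapping.lookup p m) \<in> gpoly N"
proof (cases "m \<in> Poly_Mapping.keys p")
  case True
  then show ?thesis using assms by (intro gpoly_single) (auto simp: gpoly_def)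
qed (simp add: in_keys_iff gpoly_0)

context
  fixes N :: "('r::{finite,linorder}) expo set"
  assumes add_closed: "\<And>x y. x \<in> N \<Longrightarrow> y \<in> N \<Longrightarrow> x + y \<in> N"
begin

lemma gpoly_mult:
  assumes "p \<in> gpoly N" "q \<in> gpoly N"
  shows "p * q \<in> gpoly N"
  using assms unfolding mult_eq_sum_monomials
  by (intro gpoly_sum gpoly_single add_closed) (auto simp: gpoly_def intro: cyclo_field.mult)

lemma gpoly_power: "0 \<in> N \<Longrightarrow> p \<in> gpoly N \<Longrightarrow> p ^ k \<in> gpoly N"
  by (induction k) (simp_all add: gpoly_1 gpoly_mult)

end

lemma fracfieldE:
  assumes "x \<in> fracfield N"
  obtains p q where "p \<in> gpoly N" "q \<in> gpoly N" "q \<noteq> 0" "x = Fract p q"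
  using assms by (auto simp: fracfield_def)

lemma Fract_in_fracfield: "p \<in> gpoly N \<Longrightarrow> q \<in> gpoly N \<Longrightarrow> q \<noteq> 0 \<Longrightarrow> Fract p q \<in> fracfield N"
  by (auto simp: fracfield_def)

lemma gpolyF_eq: "gpolyF N = to_fract ` gpoly N"
  by (simp add: gpolyF_def to_fract_def)

lemma gpolyF_mono: "N \<subseteq> N' \<Longrightarrow> gpolyF N \<subseteq> gpolyF N'"
  unfolding gpolyF_eq by (intro image_mono gpoly_mono)

lemma gpolyF_subset_fracfield: "0 \<in> N \<Longrightarrow> gpolyF N \<subseteq> fracfield N"
  by (auto simp: gpolyF_def intro!: Fract_in_fracfield gpoly_1)

section \<open>Mutations\<close>

text \<open>Integrality of \<open>(m,v)\<close> on \<open>N\<close> makes the floor in \<open>mu_pol\<close> additive, so the mutation is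
  multiplicative on \<open>Q[N]\<close>.\<close>
definition admissible :: "('r::finite) expo set \<Rightarrow> 'r expo \<Rightarrow> 'r lvec \<Rightarrow> bool" where
  "admissible N a v \<longleftrightarrow> 0 \<in> N \<and> (\<forall>x\<in>N. \<forall>y\<in>N. x + y \<in> N) \<and> a \<in> N \<and> pair a v = 0
     \<and> (\<forall>m\<in>N. pair m v \<in> \<int>)"

lemma admissible_omega_char:
  fixes \<omega> :: "('r::finite) lvec \<Rightarrow> 'r lvec \<Rightarrow> int"
  assumes bilin_l: "\<And>x y z. \<omega> (x + y) z = \<omega> x z + \<omega> y z"
    and skew: "\<And>x y. \<omega> x y = - \<omega> y x"
    and "v \<in> Lat"
  shows "admissible (dual Lat) (omega_char \<omega> v) v"
proof -
  have "\<omega> v v = 0" using skew[of v v] by simp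
  then show ?thesis
    using \<open>v \<in> Lat\<close> zero_in_dual[of Lat] add_in_dual[of _ Lat]
    by (auto simp: admissible_def pair_omega_char[OF bilin_l] dual_def[of Lat])
qed

definition exch_pol :: "('r::{finite,linorder}) expo \<Rightarrow> 'r galg" where
  "exch_pol a = 1 + Poly_Mapping.single a 1"

definition mu_char :: "('r::{finite,linorder}) expo \<Rightarrow> 'r lvec \<Rightarrow> 'r expo \<Rightarrow> 'r galg fract" where
  "mu_char a v m = to_fract (exch_pol a) powi (- \<lfloor>pair m v\<rfloor>)"

text \<open>The inverse mutation \<open>X^m \<mapsto> X^m (1 + X^a)^(m,v)\<close>; it fixes \<open>1 + X^a\<close> because \<open>(a,v) = 0\<close>.\<close>
definition inv_mu_pol :: "('r::{finite,linorder}) expo \<Rightarrow> 'r lvec \<Rightarrow> 'r galg \<Rightarrow> 'r galg fract" where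
  "inv_mu_pol a v = twist (\<lambda>m. inverse (mu_char a v m))"

lemma exch_pol_nonzero: "exch_pol a \<noteq> 0"
proof
  assume "exch_pol a = 0"
  then have "Poly_Mapping.lookup (exch_pol a) 0 = 0" by simp
  then show False by (simp add: exch_pol_def lookup_add lookup_one lookup_single when_def split: if_splits)
qed

lemma exch_pol_gpoly: "0 \<in> N \<Longrightarrow> a \<in> N \<Longrightarrow> exch_pol a \<in> gpoly N"
  unfolding exch_pol_def by (intro gpoly_add gpoly_1 gpoly_single cyclo_field_1)

lemma mu_char_nonzero: "mu_char a v m \<noteq> 0"
  by (simp add: mu_char_def exch_pol_nonzero)

lemma mu_char_0 [simp]: "mu_char a v 0 = 1"
  by (simp add: mu_char_def)

lemma mu_char_add:
  assumes "admissible N a v" "m \<in> N" "m' \<in> N"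
  shows "mu_char a v (m + m') = mu_char a v m * mu_char a v m'"
proof -
  have floor_add: "\<lfloor>pair (m + m') v\<rfloor> = \<lfloor>pair m v\<rfloor> + \<lfloor>pair m' v\<rfloor>"
    using assms by (simp add: pair_add floor_add2 admissible_def)
  show ?thesis
    unfolding mu_char_def floor_add minus_add_distrib
    by (rule power_int_add) (simp add: exch_pol_nonzero)
qed

lemma mu_pol_eq_twist: "mu_pol a v = twist (mu_char a v)"
  by (rule ext) (simp add: mu_pol_def twist_def extend_monomials_def mu_char_def exch_pol_def to_fract_def)

lemma mu_pol_diff: "mu_pol a v (p - q) = mu_pol a v p - mu_pol a v q"
  by (simp add: mu_pol_eq_twist twist_diff)

lemma mu_pol_mult:
  "admissible N a v \<Longrightarrow> p \<in> gpoly N \<Longrightarrow> q \<in> gpoly N \<Longrightarrow> mu_pol a v (p * q) = mu_pol a v p * mu_pol a v q"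
  unfolding mu_pol_eq_twist by (rule twist_mult[where M=N]) (simp_all add: mu_char_add gpoly_keys)

lemma inv_mu_pol_single:
  "inv_mu_pol a v (Poly_Mapping.single m c) = to_fract (Poly_Mapping.single m c) * inverse (mu_char a v m)"
  by (simp add: inv_mu_pol_def twist_single)

lemma inv_mu_pol_sum: "inv_mu_pol a v (sum f S) = (\<Sum>i\<in>S. inv_mu_pol a v (f i))"
  by (simp add: inv_mu_pol_def twist_sum)

lemma inv_mu_pol_mult:
  "admissible N a v \<Longrightarrow> Poly_Mapping.keys p \<subseteq> N \<Longrightarrow> Poly_Mapping.keys q \<subseteq> N
    \<Longrightarrow> inv_mu_pol a v (p * q) = inv_mu_pol a v p * inv_mu_pol a v q"
  unfolding inv_mu_pol_def by (rule twist_mult[where M=N]) (simp_all add: mu_char_add)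

lemma inv_mu_pol_exch_pol_power:
  assumes "admissible N a v"
  shows "inv_mu_pol a v (exch_pol a ^ k) = to_fract (exch_pol a) ^ k"
proof -
  have "mu_char a v a = 1"
    using assms by (simp add: mu_char_def admissible_def)
  then have "inv_mu_pol a v (exch_pol a) = to_fract (exch_pol a)"
    by (simp add: inv_mu_pol_def exch_pol_def twist_add twist_single twist_one)
  moreover have "Poly_Mapping.keys (exch_pol a) \<subseteq> N"
    using assms by (simp add: admissible_def gpoly_keys exch_pol_gpoly)
  ultimately show ?thesis
    using assms unfolding inv_mu_pol_def
    by (subst twist_power[where M=N]) (auto simp: mu_char_add[OF assms] admissible_def)
qed

definition mu_numerator :: "('r::{finite,linorder}) expo \<Rightarrow> 'r lvec \<Rightarrow> nat \<Rightarrow> 'r galg \<Rightarrow> 'r galg" where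
  "mu_numerator a v n p = (\<Sum>m\<in>Poly_Mapping.keys p.
     Poly_Mapping.single m (Poly_Mapping.lookup p m) * exch_pol a ^ nat (int n - \<lfloor>pair m v\<rfloor>))"

lemma exists_mu_exponent_bound: "\<exists>n. \<forall>m\<in>Poly_Mapping.keys p. \<lfloor>pair m v\<rfloor> \<le> int n"
proof (intro exI ballI)
  fix m assume "m \<in> Poly_Mapping.keys p"
  then have "nat \<bar>\<lfloor>pair m v\<rfloor>\<bar> \<le> (\<Sum>m\<in>Poly_Mapping.keys p. nat \<bar>\<lfloor>pair m v\<rfloor>\<bar>)"
    by (intro member_le_sum) auto
  then show "\<lfloor>pair m v\<rfloor> \<le> int (\<Sum>m\<in>Poly_Mapping.keys p. nat \<bar>\<lfloor>pair m v\<rfloor>\<bar>)"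
    by linarith
qed

lemma exch_pol_power_eq_mu_char:
  assumes "\<lfloor>pair m v\<rfloor> \<le> int n"
  shows "to_fract (exch_pol a) ^ nat (int n - \<lfloor>pair m v\<rfloor>) = to_fract (exch_pol a) ^ n * mu_char a v m"
proof -
  have "to_fract (exch_pol a) ^ nat (int n - \<lfloor>pair m v\<rfloor>) = to_fract (exch_pol a) powi (int n + - \<lfloor>pair m v\<rfloor>)"
    using assms by (simp flip: power_int_of_nat)
  also have "\<dots> = to_fract (exch_pol a) ^ n * mu_char a v m"
    by (subst power_int_add) (simp_all add: exch_pol_nonzero mu_char_def)
  finally show ?thesis .
qed

lemma mu_numerator_gpoly: "admissible N a v \<Longrightarrow> p \<in> gpoly N \<Longrightarrow> mu_numerator a v n p \<in> gpoly N"
  unfolding mu_numerator_def admissible_def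
  by (intro gpoly_sum gpoly_mult gpoly_power exch_pol_gpoly single_lookup_gpoly) auto

lemma to_fract_mu_numerator:
  assumes "\<forall>m\<in>Poly_Mapping.keys p. \<lfloor>pair m v\<rfloor> \<le> int n"
  shows "to_fract (mu_numerator a v n p) = to_fract (exch_pol a) ^ n * mu_pol a v p"
  using assms
  by (simp add: mu_numerator_def mu_pol_eq_twist twist_def extend_monomials_def to_fract_power
      exch_pol_power_eq_mu_char sum_distrib_left ac_simps)

lemma inv_mu_pol_mu_numerator:
  assumes adm: "admissible N a v" and p: "p \<in> gpoly N"
    and bound: "\<forall>m\<in>Poly_Mapping.keys p. \<lfloor>pair m v\<rfloor> \<le> int n"
  shows "inv_mu_pol a v (mu_numerator a v n p) = to_fract (exch_pol a) ^ n * to_fract p"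
proof -
  let ?e = "to_fract (exch_pol a)" and ?c = "\<lambda>m. Poly_Mapping.single m (Poly_Mapping.lookup p m)"
  have N: "0 \<in> N" "\<And>x y. x \<in> N \<Longrightarrow> y \<in> N \<Longrightarrow> x + y \<in> N" "a \<in> N"
    using adm by (auto simp: admissible_def)
  have keys_exch: "Poly_Mapping.keys (exch_pol a ^ i) \<subseteq> N" for i
    using gpoly_keys[OF gpoly_power[OF N(2) N(1) exch_pol_gpoly[OF N(1,3)]]] .
  have "inv_mu_pol a v (mu_numerator a v n p) = (\<Sum>m\<in>Poly_Mapping.keys p.
      inv_mu_pol a v (?c m) * inv_mu_pol a v (exch_pol a ^ nat (int n - \<lfloor>pair m v\<rfloor>)))"
    unfolding mu_numerator_def inv_mu_pol_sum
    by (simp add: inv_mu_pol_mult[OF adm gpoly_keys[OF single_lookup_gpoly[OF p]] keys_exch])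
  also have "\<dots> = (\<Sum>m\<in>Poly_Mapping.keys p. ?e ^ n * to_fract (?c m))"
    using bound
    by (intro sum.cong refl)
      (simp add: inv_mu_pol_exch_pol_power[OF adm] inv_mu_pol_single exch_pol_power_eq_mu_char mu_char_nonzero)
  also have "\<dots> = ?e ^ n * to_fract p"
    by (simp flip: sum_distrib_left to_fract_sum add: sum_monomials_keys)
  finally show ?thesis .
qed

lemma mu_pol_clear_denominators:
  assumes "admissible N a v" "p \<in> gpoly N"
  obtains P n where "P \<in> gpoly N" "to_fract P = to_fract (exch_pol a) ^ n * mu_pol a v p"
    "inv_mu_pol a v P = to_fract (exch_pol a) ^ n * to_fract p"
proof -
  obtain n where "\<forall>m\<in>Poly_Mapping.keys p. \<lfloor>pair m v\<rfloor> \<le> int n"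
    using exists_mu_exponent_bound by blast
  then show ?thesis
    using that mu_numerator_gpoly[OF assms] to_fract_mu_numerator inv_mu_pol_mu_numerator[OF assms]
    by blast
qed

lemma mu_pol_eq_0_iff:
  assumes "admissible N a v" "p \<in> gpoly N"
  shows "mu_pol a v p = 0 \<longleftrightarrow> p = 0"
proof
  assume "mu_pol a v p = 0"
  obtain P n where "to_fract P = to_fract (exch_pol a) ^ n * mu_pol a v p"
    "inv_mu_pol a v P = to_fract (exch_pol a) ^ n * to_fract p"
    using mu_pol_clear_denominators[OF assms] by metis
  with \<open>mu_pol a v p = 0\<close> show "p = 0"
    by (simp add: inv_mu_pol_def twist_def exch_pol_nonzero)
qed (simp add: mu_pol_eq_twist twist_def)

lemma mu_pol_eq_iff:
  "admissible N a v \<Longrightarrow> p \<in> gpoly N \<Longrightarrow> q \<in> gpoly N \<Longrightarrow> mu_pol a v p = mu_pol a v q \<longleftrightarrow> p = q"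
  using mu_pol_eq_0_iff[of N a v "p - q"] by (simp add: mu_pol_diff gpoly_diff)

lemma mu_Fract:
  assumes adm: "admissible N a v" and pq: "p \<in> gpoly N" "q \<in> gpoly N" "q \<noteq> 0"
  shows "mu N a v (Fract p q) = mu_pol a v p / mu_pol a v q"
proof -
  let ?rep = "\<lambda>(p', q'). p' \<in> gpoly N \<and> q' \<in> gpoly N \<and> q' \<noteq> 0 \<and> Fract p q = Fract p' q'"
  obtain p' q' where rep: "(SOME r. ?rep r) = (p', q')" by (cases "SOME r. ?rep r")
  have "?rep (p', q')"
    using someI_ex[of ?rep] pq unfolding rep by blast
  then have p'q': "p' \<in> gpoly N" "q' \<in> gpoly N" "q' \<noteq> 0" "p * q' = p' * q"
    using pq(3) by (auto simp: eq_fract)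
  then have "mu_pol a v p * mu_pol a v q' = mu_pol a v p' * mu_pol a v q"
    using pq by (simp flip: mu_pol_mult[OF adm])
  moreover have "mu_pol a v q \<noteq> 0" "mu_pol a v q' \<noteq> 0"
    using pq p'q' by (simp_all add: mu_pol_eq_0_iff[OF adm])
  ultimately show ?thesis
    unfolding mu_def rep by (simp add: frac_eq_eq)
qed

lemma mu_in_fracfield:
  assumes adm: "admissible N a v" and x: "x \<in> fracfield N"
  shows "mu N a v x \<in> fracfield N"
proof -
  have N: "0 \<in> N" "\<And>x y. x \<in> N \<Longrightarrow> y \<in> N \<Longrightarrow> x + y \<in> N" "a \<in> N"
    using adm by (auto simp: admissible_def)
  obtain p q where pq: "p \<in> gpoly N" "q \<in> gpoly N" "q \<noteq> 0" "x = Fract p q"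
    using x by (rule fracfieldE)
  obtain P n where P: "P \<in> gpoly N" "to_fract P = to_fract (exch_pol a) ^ n * mu_pol a v p"
    using mu_pol_clear_denominators[OF adm pq(1)] by metis
  obtain Q n' where Q: "Q \<in> gpoly N" "to_fract Q = to_fract (exch_pol a) ^ n' * mu_pol a v q"
    using mu_pol_clear_denominators[OF adm pq(2)] by metis
  have "mu_pol a v q \<noteq> 0"
    using pq by (simp add: mu_pol_eq_0_iff[OF adm])
  then have "Q \<noteq> 0"
    using Q(2) by (auto simp: exch_pol_nonzero)
  have "mu_pol a v p = to_fract P / to_fract (exch_pol a ^ n)"
    by (simp add: P(2) to_fract_power exch_pol_nonzero)
  moreover have "mu_pol a v q = to_fract Q / to_fract (exch_pol a ^ n')"
    by (simp add: Q(2) to_fract_power exch_pol_nonzero)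
  moreover have "mu N a v x = mu_pol a v p / mu_pol a v q"
    using pq by (simp add: mu_Fract[OF adm])
  ultimately have "mu N a v x = Fract (P * exch_pol a ^ n') (exch_pol a ^ n * Q)"
    by (simp add: Fract_conv_to_fract divide_divide_times_eq)
  also have "\<dots> \<in> fracfield N"
    using P(1) Q(1) \<open>Q \<noteq> 0\<close>
    by (intro Fract_in_fracfield gpoly_mult gpoly_power exch_pol_gpoly N) (simp_all add: exch_pol_nonzero)
  finally show ?thesis .
qed

lemma inj_on_mu:
  assumes adm: "admissible N a v"
  shows "inj_on (mu N a v) (fracfield N)"
proof
  fix x y assume "x \<in> fracfield N" "y \<in> fracfield N" and eq: "mu N a v x = mu N a v y"
  then obtain p q p' q' where pq: "p \<in> gpoly N" "q \<in> gpoly N" "q \<noteq> 0" "x = Fract p q"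
    and p'q': "p' \<in> gpoly N" "q' \<in> gpoly N" "q' \<noteq> 0" "y = Fract p' q'"
    by (metis fracfieldE)
  have N: "\<And>x y. x \<in> N \<Longrightarrow> y \<in> N \<Longrightarrow> x + y \<in> N"
    using adm by (auto simp: admissible_def)
  have "mu_pol a v q \<noteq> 0" "mu_pol a v q' \<noteq> 0"
    using pq p'q' by (simp_all add: mu_pol_eq_0_iff[OF adm])
  then have "mu_pol a v (p * q') = mu_pol a v (p' * q)"
    using eq pq p'q' by (simp add: mu_Fract[OF adm] mu_pol_mult[OF adm] frac_eq_eq)
  then have "p * q' = p' * q"
    using pq p'q' by (simp add: mu_pol_eq_iff[OF adm] gpoly_mult[OF N])
  then show "x = y"
    using pq p'q' by (simp add: eq_fract)
qed

lemma mu_superset: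
  assumes "admissible N a v" "admissible N' a v" "N \<subseteq> N'" "x \<in> fracfield N"
  shows "mu N a v x = mu N' a v x"
proof -
  obtain p q where pq: "p \<in> gpoly N" "q \<in> gpoly N" "q \<noteq> 0" "x = Fract p q"
    using assms(4) by (rule fracfieldE)
  moreover have "p \<in> gpoly N'" "q \<in> gpoly N'"
    using pq gpoly_mono[OF assms(3)] by auto
  ultimately show ?thesis
    by (simp add: mu_Fract[OF assms(1)] mu_Fract[OF assms(2)])
qed

section \<open>The action of the finite group L/L'\<close>

definition act_char :: "('r::{finite,linorder}) lvec \<Rightarrow> 'r expo \<Rightarrow> complex" where
  "act_char n m = cis (2 * pi * of_rat (pair m n))"

lemma act_char_0 [simp]: "act_char n 0 = 1"
  by (simp add: act_char_def)

lemma act_char_add: "act_char n (m + m') = act_char n m * act_char n m'"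
  by (simp add: act_char_def pair_add of_rat_add distrib_left cis_mult)

lemma act_char_nonzero: "act_char n m \<noteq> 0"
  by (simp add: act_char_def)

lemma act_char_eq_1_iff: "act_char n m = 1 \<longleftrightarrow> pair m n \<in> \<int>"
proof
  assume "act_char n m = 1"
  then have "cos (2 * pi * of_rat (pair m n)) = 1"
    unfolding act_char_def by (metis cis.sel(1) one_complex.sel(1))
  then obtain i :: int where "2 * pi * of_rat (pair m n) = of_int i * 2 * pi"
    by (auto simp: cos_one_2pi_int)
  then have "of_rat (pair m n) = (of_rat (of_int i) :: real)" by simp
  then have "pair m n = of_int i" by (simp only: of_rat_eq_iff)
  then show "pair m n \<in> \<int>" by simp
qed (auto simp: act_char_def elim!: Ints_cases)

lemma act_eq_extend_monomials: "act n = extend_monomials (\<lambda>m c. Poly_Mapping.single m (act_char n m * c))"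
  by (rule ext) (simp add: act_def extend_monomials_def act_char_def)

lemma act_single: "act n (Poly_Mapping.single m c) = Poly_Mapping.single m (act_char n m * c)"
  by (simp add: act_eq_extend_monomials extend_monomials_single)

lemma act_add: "act n (p + q) = act n p + act n q"
  unfolding act_eq_extend_monomials
  by (rule extend_monomials_add) (simp_all add: distrib_left single_add)

lemma act_mult: "act n (p * q) = act n p * act n q"
  unfolding act_eq_extend_monomials
  by (rule extend_monomials_mult[where M=UNIV])
    (simp_all add: algebra_simps single_add mult_single act_char_add)

lemma act_one: "act n 1 = 1"
  by (simp add: act_eq_extend_monomials extend_monomials_one)

lemma lookup_act: "Poly_Mapping.lookup (act n f) m = act_char n m * Poly_Mapping.lookup f m"
  by (cases "m \<in> Poly_Mapping.keys f")
    (simp_all add: act_def act_char_def lookup_sum lookup_single when_def in_keys_iff)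

lemma keys_act: "Poly_Mapping.keys (act n f) = Poly_Mapping.keys f"
  by (auto simp: in_keys_iff lookup_act act_char_nonzero)

lemma act_eq_0_iff: "act n f = 0 \<longleftrightarrow> f = 0"
  by (metis keys_act keys_eq_empty)

lemma act_gpoly: "p \<in> gpoly N \<Longrightarrow> act n p \<in> gpoly N"
  by (auto simp: gpoly_def keys_act lookup_act act_char_def intro: cyclo_field.mult cyclo_field.root)

lemma act_fixed_iff: "(\<forall>n. act n f = f) \<longleftrightarrow> Poly_Mapping.keys f \<subseteq> dual UNIV"
proof -
  have "(\<forall>n. act n f = f) \<longleftrightarrow> (\<forall>n. \<forall>m\<in>Poly_Mapping.keys f. act_char n m = 1)"
    by (auto simp: poly_mapping_eq_iff fun_eq_iff lookup_act) (metis in_keys_iff)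
  then show ?thesis
    by (auto simp: act_char_eq_1_iff dual_def)
qed

lemma act_fract_Fract:
  assumes "q \<noteq> 0"
  shows "act_fract n (Fract p q) = Fract (act n p) (act n q)"
proof -
  let ?rep = "\<lambda>(p', q'). q' \<noteq> 0 \<and> Fract p q = Fract p' q'"
  obtain p' q' where rep: "(SOME r. ?rep r) = (p', q')" by (cases "SOME r. ?rep r")
  have "?rep (p', q')"
    using someI_ex[of ?rep] assms unfolding rep by blast
  then have "q' \<noteq> 0" "act n p' * act n q = act n p * act n q'"
    using assms by (auto simp: eq_fract simp flip: act_mult)
  then show ?thesis
    unfolding act_fract_def rep using assms by (simp add: eq_fract act_eq_0_iff)
qed

lemma act_fract_to_fract: "act_fract n (to_fract p) = to_fract (act n p)"
  by (simp add: to_fract_def act_fract_Fract act_one)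

lemma act_fract_add: "act_fract n (x + y) = act_fract n x + act_fract n y"
  by (cases x, cases y) (simp add: act_fract_Fract act_add act_mult act_eq_0_iff)

lemma act_fract_mult: "act_fract n (x * y) = act_fract n x * act_fract n y"
  by (cases x, cases y) (simp add: act_fract_Fract act_mult)

lemma act_fract_0: "act_fract n 0 = 0"
  using act_fract_to_fract[of n 0] by (simp add: act_eq_0_iff)

lemma act_fract_1: "act_fract n 1 = 1"
  using act_fract_to_fract[of n 1] by (simp add: act_one)

lemma act_fract_inverse: "act_fract n (inverse x) = inverse (act_fract n x)"
proof (cases x)
  case (Fract p q)
  then show ?thesis
    by (cases "p = 0") (simp_all add: act_fract_Fract act_fract_0 fract_collapse act_eq_0_iff)
qed

lemma act_fract_power: "act_fract n (x ^ k) = act_fract n x ^ k"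
  by (induction k) (simp_all add: act_fract_1 act_fract_mult)

lemma act_fract_powi: "act_fract n (x powi k) = act_fract n x powi k"
  by (simp add: power_int_def act_fract_power act_fract_inverse)

lemma act_fract_divide: "act_fract n (x / y) = act_fract n x / act_fract n y"
  by (simp add: divide_inverse act_fract_mult act_fract_inverse)

lemma act_fract_sum: "act_fract n (sum f S) = (\<Sum>i\<in>S. act_fract n (f i))"
  by (induction S rule: infinite_finite_induct) (simp_all add: act_fract_0 act_fract_add)

lemma act_fract_in_fracfield: "x \<in> fracfield N \<Longrightarrow> act_fract n x \<in> fracfield N"
  by (auto elim!: fracfieldE intro!: Fract_in_fracfield act_gpoly simp: act_fract_Fract act_eq_0_iff)

lemma act_fract_twist:
  assumes "\<And>m. m \<in> Poly_Mapping.keys p \<Longrightarrow> act_fract n (E m) = E m"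
  shows "act_fract n (twist E p) = twist E (act n p)"
proof -
  have "act_fract n (twist E p) = (\<Sum>m\<in>Poly_Mapping.keys p.
      to_fract (Poly_Mapping.single m (act_char n m * Poly_Mapping.lookup p m)) * E m)"
    using assms
    by (simp add: twist_def extend_monomials_def act_fract_sum act_fract_mult act_fract_to_fract act_single)
  also have "\<dots> = twist E (act n p)"
    by (simp add: twist_def extend_monomials_def keys_act lookup_act)
  finally show ?thesis .
qed

lemma act_fract_mu_pol:
  assumes "a \<in> dual UNIV"
  shows "act_fract n (mu_pol a v p) = mu_pol a v (act n p)"
proof -
  have "Poly_Mapping.keys (exch_pol a) \<subseteq> dual UNIV"
    using assms by (simp add: gpoly_keys exch_pol_gpoly zero_in_dual)
  then have "act_fract n (to_fract (exch_pol a)) = to_fract (exch_pol a)"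
    by (simp add: act_fract_to_fract flip: act_fixed_iff)
  then show ?thesis
    unfolding mu_pol_eq_twist by (intro act_fract_twist) (simp add: mu_char_def act_fract_powi)
qed

lemma act_fract_mu:
  assumes adm: "admissible N a v" and a: "a \<in> dual UNIV" and x: "x \<in> fracfield N"
  shows "act_fract n (mu N a v x) = mu N a v (act_fract n x)"
proof -
  obtain p q where pq: "p \<in> gpoly N" "q \<in> gpoly N" "q \<noteq> 0" "x = Fract p q"
    using x by (rule fracfieldE)
  then have "act_fract n (mu N a v x) = mu_pol a v (act n p) / mu_pol a v (act n q)"
    by (simp add: mu_Fract[OF adm] act_fract_divide act_fract_mu_pol[OF a])
  also have "\<dots> = mu N a v (act_fract n x)"
    using pq by (simp add: mu_Fract[OF adm] act_gpoly act_eq_0_iff act_fract_Fract)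
  finally show ?thesis .
qed

lemma gpolyF_fixed_iff:
  assumes "x \<in> gpolyF N"
  shows "(\<forall>n. act_fract n x = x) \<longleftrightarrow> x \<in> gpolyF (dual UNIV)"
proof -
  obtain p where p: "p \<in> gpoly N" "x = to_fract p"
    using assms by (auto simp: gpolyF_eq)
  moreover have "inj to_fract"
    by (rule injI) simp
  ultimately have "x \<in> gpolyF (dual UNIV) \<longleftrightarrow> Poly_Mapping.keys p \<subseteq> dual UNIV"
    by (auto simp: gpolyF_eq gpoly_def inj_image_mem_iff)
  moreover have "(\<forall>n. act_fract n x = x) \<longleftrightarrow> (\<forall>n. act n p = p)"
    using p(2) by (simp add: act_fract_to_fract)
  ultimately show ?thesis
    by (simp add: act_fixed_iff)
qed

lemma invariants_eq_inter_gpolyF: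
  "S \<subseteq> gpolyF N \<Longrightarrow> invariants S = S \<inter> gpolyF (dual UNIV)"
  using gpolyF_fixed_iff by (fastforce simp: invariants_def)

section \<open>Upper bounds of a sublattice\<close>

lemma funpow_mu_superset:
  assumes "admissible N a v" "admissible N' a v" "N \<subseteq> N'" "x \<in> fracfield N"
  shows "(mu N a v ^^ k) x = (mu N' a v ^^ k) x"
proof (rule funpow_cong_on[of "fracfield N"])
  show "\<And>z. z \<in> fracfield N \<Longrightarrow> mu N a v z \<in> fracfield N"
    by (rule mu_in_fracfield[OF assms(1)])
  show "\<And>z. z \<in> fracfield N \<Longrightarrow> mu N a v z = mu N' a v z"
    by (rule mu_superset[OF assms(1-3)])
qed (rule assms(4))

text \<open>The mutation commutes with the action and is injective, so a preimage of an invariant element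
  is invariant.\<close>
lemma funpow_mu_preimage_in_gpolyF_dual:
  assumes adm: "admissible N a v" and a: "a \<in> dual UNIV"
    and y: "y \<in> gpolyF N" and x: "(mu N a v ^^ k) y \<in> gpolyF (dual UNIV)"
  shows "y \<in> gpolyF (dual UNIV)"
proof -
  let ?T = "mu N a v ^^ k"
  have mu_closed: "\<And>z. z \<in> fracfield N \<Longrightarrow> mu N a v z \<in> fracfield N"
    by (rule mu_in_fracfield[OF adm])
  have yF: "y \<in> fracfield N"
    using adm y gpolyF_subset_fracfield by (auto simp: admissible_def)
  have "act_fract n y = y" for n
  proof (rule inj_onD[OF inj_on_funpow[OF mu_closed inj_on_mu[OF adm]]])
    have "?T (act_fract n y) = act_fract n (?T y)"
      using yF by (intro funpow_commute_on[of "fracfield N", symmetric] mu_closed act_fract_mu[OF adm a])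
    also have "\<dots> = ?T y"
      using x gpolyF_fixed_iff by blast
    finally show "?T (act_fract n y) = ?T y" .
  qed (use yF in \<open>simp_all add: act_fract_in_fracfield\<close>)
  then show ?thesis
    using gpolyF_fixed_iff y by blast
qed

lemma mem_funpow_mu_image_iff:
  assumes adm: "admissible (dual UNIV) a v" and adm': "admissible N a v" and sub: "dual UNIV \<subseteq> N"
    and x: "x \<in> gpolyF (dual UNIV)"
  shows "x \<in> (mu (dual UNIV) a v ^^ k) ` gpolyF (dual UNIV) \<longleftrightarrow> x \<in> (mu N a v ^^ k) ` gpolyF N"
proof -
  have a: "a \<in> dual UNIV"
    using adm by (simp add: admissible_def)
  have "(mu (dual UNIV) a v ^^ k) y = (mu N a v ^^ k) y" if "y \<in> gpolyF (dual UNIV)" for y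
    using that gpolyF_subset_fracfield[OF zero_in_dual] by (blast intro: funpow_mu_superset[OF adm adm' sub])
  then show ?thesis
    using x gpolyF_mono[OF sub] funpow_mu_preimage_in_gpolyF_dual[OF adm' a] by (auto simp: image_iff)
qed

lemma upper_bound_UNIV_eq_inter:
  assumes adm: "\<And>v. admissible (dual UNIV) (omega_char \<omega> v) v"
    and adm': "\<And>v. v \<in> L' \<Longrightarrow> admissible (dual L') (omega_char \<omega> v) v"
    and V: "set V \<subseteq> L'"
  shows "upper_bound UNIV \<omega> V = upper_bound L' \<omega> V \<inter> gpolyF (dual UNIV)"
proof -
  have sub: "dual UNIV \<subseteq> dual L'"
    by (rule dual_antimono) simp
  have "x \<in> upper_bound UNIV \<omega> V \<longleftrightarrow> x \<in> upper_bound L' \<omega> V" if x: "x \<in> gpolyF (dual UNIV)" for x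
  proof -
    have "x \<in> (mu (dual UNIV) (omega_char \<omega> v) v ^^ count_list V v) ` gpolyF (dual UNIV) \<longleftrightarrow>
        (v \<in> L' \<longrightarrow> x \<in> (mu (dual L') (omega_char \<omega> v) v ^^ count_list V v) ` gpolyF (dual L'))" for v
    proof (cases "v \<in> L'")
      case True
      then show ?thesis using mem_funpow_mu_image_iff[OF adm adm' sub x] by simp
    next
      case False
      then have "count_list V v = 0" using V by (auto simp: count_list_0_iff)
      then show ?thesis using x False by simp
    qed
    then show ?thesis
      using x gpolyF_mono[OF sub] by (auto simp: upper_bound_def)
  qed
  moreover have "upper_bound UNIV \<omega> V \<subseteq> gpolyF (dual UNIV)"
    by (simp add: upper_bound_def)
  ultimately show ?thesis
    by blast
qed

text \<open>Only bilinearity in the first argument and skew-symmetry of \<open>\<omega>\<close> are used: the duals are sets of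
  rational vectors by definition, so neither the subgroup property nor the finite index of \<open>L'\<close> is
  needed.\<close>
theorem proposition2p7:
  fixes \<omega> :: "('r::{finite,linorder}) lvec \<Rightarrow> 'r lvec \<Rightarrow> int"
    and V :: "'r lvec list"
    and L' :: "'r lvec set"
  assumes bilin_l: "\<And>x y z. \<omega> (x + y) z = \<omega> x z + \<omega> y z"
    and bilin_r: "\<And>x y z. \<omega> x (y + z) = \<omega> x y + \<omega> x z"
    and skew: "\<And>x y. \<omega> x y = - \<omega> y x"
    and sub_zero: "0 \<in> L'"
    and sub_add: "\<And>x y. x \<in> L' \<Longrightarrow> y \<in> L' \<Longrightarrow> x + y \<in> L'"
    and sub_uminus: "\<And>x. x \<in> L' \<Longrightarrow> - x \<in> L'"
    and fin_index: "finite ((\<lambda>x. (\<lambda>y. x + y) ` L') ` UNIV)"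
    and V_in: "set V \<subseteq> L'"
  shows "upper_bound UNIV \<omega> V = invariants (upper_bound L' \<omega> V)
       \<and> invariants (upper_bound L' \<omega> V) = upper_bound L' \<omega> V \<inter> gpolyF (dual UNIV)"
proof -
  have "upper_bound UNIV \<omega> V = upper_bound L' \<omega> V \<inter> gpolyF (dual UNIV)"
    using admissible_omega_char[OF bilin_l skew] V_in by (intro upper_bound_UNIV_eq_inter) auto
  moreover have "invariants (upper_bound L' \<omega> V) = upper_bound L' \<omega> V \<inter> gpolyF (dual UNIV)"
    by (rule invariants_eq_inter_gpolyF[of _ "dual L'"]) (auto simp: upper_bound_def)
  ultimately show ?thesis
    by simp
qed

end
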